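(* Let $L=\mathbb{C}(x_1,y_1,z_1,x_2,y_2,z_2)$ with $\mathbb{Z}/3\mathbb{Z}$ acting by simultaneous cyclic permutation of $(x_1,y_1,z_1)$ and $(x_2,y_2,z_2)$. The subfield of $L$ generated by $F_1(x_1,y_1,z_1),F_2(x_1,y_1,z_1),F_3(x_1,y_1,z_1)$, $F_1(x_2,y_2,z_2)$, $G_1(x_1,y_1,z_1,x_2,y_2,z_2)$, and $G_2(x_1,y_1,z_1,x_2,y_2,z_2)$ equals $K=\mathbb{C}(a_1,a_2,b_1^3,b_1c_1,b_1c_2,c_1b_2)$, and $K=L^{\mathbb{Z}/3\mathbb{Z}}$. In other words, every $\mathbb{Z}/3\mathbb{Z}$-invariant rational function of these six variables is a rational function of these six functions.
   Context: Let $\zeta=e^{2\pi i/3}$ and for $\ell=1,2$ set $a_\ell=x_\ell+y_\ell+z_\ell$, $b_\ell=x_\ell+\zeta y_\ell+\zeta^2 z_\ell$, $c_\ell=x_\ell+\zeta^2 y_\ell+\zeta z_\ell$. For a triple $(x,y,z)$ with corresponding $a,b,c$, $F_1=a$, $F_2=\frac{b^2}{c}+\frac{c^2}{b}$, $F_3=\frac{1}{i}\left(\frac{b^2}{c}-\frac{c^2}{b}\right)$. $G_1$ and $G_2$ are the real and imaginary parts of $b_1c_2$. The generator of $\mathbb{Z}/3\mathbb{Z}$ multiplies $b_1,b_2$ by $\zeta$ and $c_1,c_2$ by $\zeta^2$. *)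

theory Defs
  imports Complex_Main "HOL-Computational_Algebra.Polynomial" "HOL-Computational_Algebra.Fraction_Field"
begin

text \<open>The polynomial ring C[x1,y1,z1,x2,y2,z2], realised as iterated univariate
polynomials (x1 innermost, z2 outermost), and its field of fractions L.\<close>
type_synonym P6 = "complex poly poly poly poly poly poly"
type_synonym L6 = "P6 fract"

definition cst :: "complex \<Rightarrow> L6" where
  "cst c = Fract [:[:[:[:[:[:c:]:]:]:]:]:] 1"

definition X1 :: L6 where "X1 = Fract [:[:[:[:[:[:0, 1:]:]:]:]:]:] 1"
definition Y1 :: L6 where "Y1 = Fract [:[:[:[:[:0, 1:]:]:]:]:] 1"
definition Z1 :: L6 where "Z1 = Fract [:[:[:[:0, 1:]:]:]:] 1"
definition X2 :: L6 where "X2 = Fract [:[:[:0, 1:]:]:] 1"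
definition Y2 :: L6 where "Y2 = Fract [:[:0, 1:]:] 1"
definition Z2 :: L6 where "Z2 = Fract [:0, 1:] 1"

definition ev1 :: "L6 \<Rightarrow> complex poly \<Rightarrow> L6" where
  "ev1 v1 p = poly (map_poly cst p) v1"
definition ev2 :: "L6 \<Rightarrow> L6 \<Rightarrow> complex poly poly \<Rightarrow> L6" where
  "ev2 v1 v2 p = poly (map_poly (ev1 v1) p) v2"
definition ev3 :: "L6 \<Rightarrow> L6 \<Rightarrow> L6 \<Rightarrow> complex poly poly poly \<Rightarrow> L6" where
  "ev3 v1 v2 v3 p = poly (map_poly (ev2 v1 v2) p) v3"
definition ev4 :: "L6 \<Rightarrow> L6 \<Rightarrow> L6 \<Rightarrow> L6 \<Rightarrow> complex poly poly poly poly \<Rightarrow> L6" where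
  "ev4 v1 v2 v3 v4 p = poly (map_poly (ev3 v1 v2 v3) p) v4"
definition ev5 :: "L6 \<Rightarrow> L6 \<Rightarrow> L6 \<Rightarrow> L6 \<Rightarrow> L6 \<Rightarrow> complex poly poly poly poly poly \<Rightarrow> L6" where
  "ev5 v1 v2 v3 v4 v5 p = poly (map_poly (ev4 v1 v2 v3 v4) p) v5"
definition ev6 :: "L6 \<Rightarrow> L6 \<Rightarrow> L6 \<Rightarrow> L6 \<Rightarrow> L6 \<Rightarrow> L6 \<Rightarrow> P6 \<Rightarrow> L6" where
  "ev6 v1 v2 v3 v4 v5 v6 p = poly (map_poly (ev5 v1 v2 v3 v4 v5) p) v6"

text \<open>The generator of Z/3Z: the C-automorphism of L6 substituting
x_l -> y_l, y_l -> z_l, z_l -> x_l simultaneously for l = 1,2.\<close>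
definition sigma :: "L6 \<Rightarrow> L6" where
  "sigma f = (SOME r. \<exists>a b. b \<noteq> 0 \<and> f = Fract a b \<and>
      r = ev6 Y1 Z1 X1 Y2 Z2 X2 a / ev6 Y1 Z1 X1 Y2 Z2 X2 b)"

inductive_set gen_subfield :: "L6 set \<Rightarrow> L6 set" for S :: "L6 set" where
  gen_base: "f \<in> S \<Longrightarrow> f \<in> gen_subfield S"
| gen_const: "cst c \<in> gen_subfield S"
| gen_add: "f \<in> gen_subfield S \<Longrightarrow> g \<in> gen_subfield S \<Longrightarrow> f + g \<in> gen_subfield S"
| gen_uminus: "f \<in> gen_subfield S \<Longrightarrow> - f \<in> gen_subfield S"
| gen_mult: "f \<in> gen_subfield S \<Longrightarrow> g \<in> gen_subfield S \<Longrightarrow> f * g \<in> gen_subfield S"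
| gen_inverse: "f \<in> gen_subfield S \<Longrightarrow> inverse f \<in> gen_subfield S"

definition zeta :: complex where "zeta = cis (2 * pi / 3)"

definition aa :: "L6 \<Rightarrow> L6 \<Rightarrow> L6 \<Rightarrow> L6" where "aa x y z = x + y + z"
definition bb :: "L6 \<Rightarrow> L6 \<Rightarrow> L6 \<Rightarrow> L6" where
  "bb x y z = x + cst zeta * y + cst (zeta ^ 2) * z"
definition cc :: "L6 \<Rightarrow> L6 \<Rightarrow> L6 \<Rightarrow> L6" where
  "cc x y z = x + cst (zeta ^ 2) * y + cst zeta * z"

definition F1 :: "L6 \<Rightarrow> L6 \<Rightarrow> L6 \<Rightarrow> L6" where "F1 x y z = aa x y z"
definition F2 :: "L6 \<Rightarrow> L6 \<Rightarrow> L6 \<Rightarrow> L6" where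
  "F2 x y z = (bb x y z)^2 / cc x y z + (cc x y z)^2 / bb x y z"
definition F3 :: "L6 \<Rightarrow> L6 \<Rightarrow> L6 \<Rightarrow> L6" where
  "F3 x y z = cst (1 / \<i>) * ((bb x y z)^2 / cc x y z - (cc x y z)^2 / bb x y z)"

text \<open>Real and imaginary parts of b1*c2 (for real variables, conj b_l = c_l).\<close>
definition G1 :: "L6 \<Rightarrow> L6 \<Rightarrow> L6 \<Rightarrow> L6 \<Rightarrow> L6 \<Rightarrow> L6 \<Rightarrow> L6" where
  "G1 x1 y1 z1 x2 y2 z2 =
     cst (1/2) * (bb x1 y1 z1 * cc x2 y2 z2 + cc x1 y1 z1 * bb x2 y2 z2)"
definition G2 :: "L6 \<Rightarrow> L6 \<Rightarrow> L6 \<Rightarrow> L6 \<Rightarrow> L6 \<Rightarrow> L6 \<Rightarrow> L6" where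
  "G2 x1 y1 z1 x2 y2 z2 =
     cst (1 / (2 * \<i>)) * (bb x1 y1 z1 * cc x2 y2 z2 - cc x1 y1 z1 * bb x2 y2 z2)"

end

theory Submission
  imports Defs
begin

text \<open>The cyclic substitution is induced by a ring automorphism of order 3 of the polynomial ring;
it fixes a_l and multiplies b_l by \<omega>^2 and c_l by \<omega>, where \<omega> = \<zeta>. Hence the generators of K are
invariant, and the identities F_2 + i F_3 = 2 b_1^2/c_1, F_2 - i F_3 = 2 c_1^2/b_1 and
G_1 \<plusminus> i G_2 = b_1 c_2, c_1 b_2 show that the two families generate the same field.
Conversely, as b_1^3, b_1 c_1, b_1 c_2 and c_1 b_2 lie in K, the K-span V of 1, b_1, b_1^2 is a
ring. It contains the a_l, b_l, c_l, hence every variable (inverse discrete Fourier transform) and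
every polynomial. The automorphism maps u_0 + u_1 b_1 + u_2 b_1^2 to
u_0 + \<omega>^2 u_1 b_1 + \<omega> u_2 b_1^2, so averaging over the group shows that invariant elements of V
lie in K. Finally an invariant fraction p/q is the quotient of the invariant elements
p \<sigma>(q) \<sigma>^2(q) and q \<sigma>(q) \<sigma>^2(q) of V.\<close>

section \<open>Ring homomorphisms and evaluation of polynomials\<close>

definition is_ring_hom :: "('a::comm_ring_1 \<Rightarrow> 'b::comm_ring_1) \<Rightarrow> bool" where
  "is_ring_hom h \<longleftrightarrow>
     h 0 = 0 \<and> h 1 = 1 \<and> (\<forall>x y. h (x + y) = h x + h y) \<and> (\<forall>x y. h (x * y) = h x * h y)"

lemma ring_hom_0: "is_ring_hom h \<Longrightarrow> h 0 = 0"
  and ring_hom_1: "is_ring_hom h \<Longrightarrow> h 1 = 1"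
  and ring_hom_add: "is_ring_hom h \<Longrightarrow> h (x + y) = h x + h y"
  and ring_hom_mult: "is_ring_hom h \<Longrightarrow> h (x * y) = h x * h y"
  by (simp_all add: is_ring_hom_def)

lemma ring_hom_uminus: assumes "is_ring_hom h" shows "h (- x) = - h x"
proof -
  have "h (- x) + h x = 0"
    using ring_hom_add[OF assms, of "- x" x] ring_hom_0[OF assms] by simp
  then show ?thesis by (simp add: eq_neg_iff_add_eq_0)
qed

lemma ring_hom_diff: "is_ring_hom h \<Longrightarrow> h (x - y) = h x - h y"
  using ring_hom_add[of h x "- y"] ring_hom_uminus[of h y] by simp

lemma ring_hom_power: "is_ring_hom h \<Longrightarrow> h (x ^ n) = h x ^ n"
  by (induction n) (simp_all add: ring_hom_1 ring_hom_mult)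

lemmas ring_hom_simps = ring_hom_0 ring_hom_1 ring_hom_add ring_hom_mult ring_hom_uminus
  ring_hom_diff ring_hom_power

lemma ring_hom_of_nat: "is_ring_hom h \<Longrightarrow> h (of_nat n) = of_nat n"
  by (induction n) (simp_all add: ring_hom_simps)

lemma ring_hom_numeral: "is_ring_hom h \<Longrightarrow> h (numeral n) = numeral n"
  using ring_hom_of_nat[of h "numeral n"] by simp

lemma ring_hom_inverse:
  fixes h :: "'a::field \<Rightarrow> 'b::field"
  assumes "is_ring_hom h"
  shows "h (inverse x) = inverse (h x)"
proof (cases "x = 0")
  case False
  then have "h x * h (inverse x) = 1"
    by (simp flip: ring_hom_mult[OF assms] add: ring_hom_1[OF assms])
  then show ?thesis by (rule inverse_unique[symmetric])
qed (simp add: ring_hom_0[OF assms])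

lemma ring_hom_divide: "is_ring_hom (h :: 'a::field \<Rightarrow> 'b::field) \<Longrightarrow> h (x / y) = h x / h y"
  by (simp add: divide_inverse ring_hom_mult ring_hom_inverse)

lemma ring_hom_eq_0_iff:
  fixes h :: "'a::field \<Rightarrow> 'b::field"
  assumes "is_ring_hom h"
  shows "h x = 0 \<longleftrightarrow> x = 0"
proof
  assume "h x = 0"
  then have "h (x * inverse x) = 0" by (simp add: ring_hom_mult[OF assms])
  then show "x = 0" by (metis ring_hom_1[OF assms] right_inverse zero_neq_one)
qed (simp add: ring_hom_0[OF assms])

lemma is_ring_hom_id: "is_ring_hom (\<lambda>x. x)"
  by (simp add: is_ring_hom_def)

lemma is_ring_hom_comp: "is_ring_hom f \<Longrightarrow> is_ring_hom g \<Longrightarrow> is_ring_hom (f \<circ> g)"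
  by (simp add: is_ring_hom_def)

lemma is_ring_hom_const_poly: "is_ring_hom h \<Longrightarrow> is_ring_hom (\<lambda>x. [:h x:])"
  by (simp add: is_ring_hom_def one_pCons mult_to_poly)

definition peval :: "('a::zero \<Rightarrow> 'b::comm_ring_1) \<Rightarrow> 'b \<Rightarrow> 'a poly \<Rightarrow> 'b" where
  "peval h v p = poly (map_poly h p) v"

lemma peval_0 [simp]: "peval h v 0 = 0"
  by (simp add: peval_def)

lemma peval_pCons: "h 0 = 0 \<Longrightarrow> peval h v (pCons a p) = h a + v * peval h v p"
  by (simp add: peval_def map_poly_pCons)

lemma peval_const [simp]: "is_ring_hom h \<Longrightarrow> peval h v [:a:] = h a"
  by (simp add: peval_def map_poly_pCons ring_hom_0)

lemma peval_X [simp]: "is_ring_hom h \<Longrightarrow> peval h v [:0, 1:] = v"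
  by (simp add: peval_def map_poly_pCons ring_hom_0 ring_hom_1)

lemma is_ring_hom_peval [simp]: assumes "is_ring_hom h" shows "is_ring_hom (peval h v)"
proof -
  have add: "peval h v (p + q) = peval h v p + peval h v q" for p q
  proof -
    have "map_poly h (p + q) = map_poly h p + map_poly h q"
      by (rule poly_eqI) (simp add: coeff_map_poly ring_hom_simps[OF assms])
    then show ?thesis by (simp add: peval_def)
  qed
  have mult: "peval h v (p * q) = peval h v p * peval h v q" for p q
  proof (induction p)
    case (pCons a p)
    have "pCons a p * q = smult a q + pCons 0 (p * q)" by simp
    moreover have "peval h v (smult a q) = h a * peval h v q"
      by (simp add: peval_def map_poly_smult ring_hom_simps[OF assms])
    ultimately show ?case
      by (simp add: add pCons.IH peval_pCons ring_hom_0[OF assms] algebra_simps)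
  qed (simp add: peval_def)
  show ?thesis
    unfolding is_ring_hom_def using add mult
    by (simp add: peval_def map_poly_1 ring_hom_simps[OF assms])
qed

lemma comp_peval:
  assumes "is_ring_hom \<phi>" "is_ring_hom h"
  shows "\<phi> \<circ> peval h v = peval (\<phi> \<circ> h) (\<phi> v)"
proof
  fix p show "(\<phi> \<circ> peval h v) p = peval (\<phi> \<circ> h) (\<phi> v) p"
    by (induction p) (simp_all add: peval_pCons ring_hom_simps[OF assms(1)] ring_hom_0[OF assms(2)])
qed

lemma peval_self:
  assumes "is_ring_hom e"
  shows "peval (\<lambda>a. e [:a:]) (e [:0, 1:]) = e"
proof
  fix p show "peval (\<lambda>a. e [:a:]) (e [:0, 1:]) p = e p"
  proof (induction p)
    case (pCons a p)
    have "e (pCons a p) = e ([:a:] + [:0, 1:] * p)" by simp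
    also have "\<dots> = e [:a:] + e [:0, 1:] * e p"
      by (simp only: ring_hom_add[OF assms] ring_hom_mult[OF assms])
    finally show ?case
      using pCons.IH by (simp add: peval_pCons ring_hom_0[OF assms])
  qed (simp add: ring_hom_0[OF assms])
qed

lemma peval_closed:
  assumes "h 0 = 0" "\<And>a. h a \<in> R" "v \<in> R" "0 \<in> R"
    and "\<And>x y. x \<in> R \<Longrightarrow> y \<in> R \<Longrightarrow> x + y \<in> R" "\<And>x y. x \<in> R \<Longrightarrow> y \<in> R \<Longrightarrow> x * y \<in> R"
  shows "peval h v p \<in> R"
  by (induction p) (use assms in \<open>simp_all add: peval_pCons\<close>)

section \<open>Automorphisms of order 3\<close>

lemma cube_root_inversion:
  fixes \<zeta> x y z :: "'a::idom"
  assumes "\<zeta> ^ 3 = 1" "1 + \<zeta> + \<zeta> ^ 2 = 0"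
  shows "(x + y + z) + (x + \<zeta> * y + \<zeta>^2 * z) + (x + \<zeta>^2 * y + \<zeta> * z) = 3 * x"
    and "(x + y + z) + \<zeta>^2 * (x + \<zeta> * y + \<zeta>^2 * z) + \<zeta> * (x + \<zeta>^2 * y + \<zeta> * z) = 3 * y"
    and "(x + y + z) + \<zeta> * (x + \<zeta> * y + \<zeta>^2 * z) + \<zeta>^2 * (x + \<zeta>^2 * y + \<zeta> * z) = 3 * z"
  using assms by algebra+

lemma cube_root_average:
  fixes \<zeta> u0 u1 u2 b :: "'a::idom"
  assumes "\<zeta> ^ 3 = 1" "1 + \<zeta> + \<zeta> ^ 2 = 0"
  shows "(u0 + u1 * b + u2 * b^2) + (u0 + (\<zeta>^2 * u1) * b + (\<zeta> * u2) * b^2)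
      + (u0 + (\<zeta>^2 * (\<zeta>^2 * u1)) * b + (\<zeta> * (\<zeta> * u2)) * b^2) = 3 * u0"
  using assms by algebra

text \<open>Norm argument. The identity p / q = M / N below also holds for q = 0, where both sides are 0,
  so no hypothesis q \<noteq> 0 is needed.\<close>

lemma fixed_quotient_mem:
  fixes \<sigma> :: "'a::field \<Rightarrow> 'a"
  assumes hom: "is_ring_hom \<sigma>" and order3: "\<And>x. \<sigma> (\<sigma> (\<sigma> x)) = x"
    and R: "\<And>x. x \<in> R \<Longrightarrow> \<sigma> x \<in> R" "\<And>x y. x \<in> R \<Longrightarrow> y \<in> R \<Longrightarrow> x * y \<in> R"
    and fixed_R: "\<And>x. x \<in> R \<Longrightarrow> \<sigma> x = x \<Longrightarrow> x \<in> F"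
    and F: "\<And>x y. x \<in> F \<Longrightarrow> y \<in> F \<Longrightarrow> x / y \<in> F"
    and pq: "p \<in> R" "q \<in> R" "\<sigma> (p / q) = p / q"
  shows "p / q \<in> F"
proof -
  define N where "N = q * \<sigma> q * \<sigma> (\<sigma> q)"
  define M where "M = p * \<sigma> q * \<sigma> (\<sigma> q)"
  have "\<sigma> N = N"
    by (simp add: N_def ring_hom_mult[OF hom] order3 ac_simps)
  have M: "M = p / q * N"
  proof (cases "q = 0")
    case False
    then show ?thesis by (simp add: M_def N_def)
  qed (simp add: M_def N_def ring_hom_0[OF hom])
  have "p / q = M / N"
  proof (cases "q = 0")
    case False
    then have "N \<noteq> 0" by (simp add: N_def ring_hom_eq_0_iff[OF hom])
    then show ?thesis by (simp add: M)
  qed (simp add: M_def N_def ring_hom_0[OF hom])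
  moreover have "\<sigma> M = \<sigma> (p / q) * \<sigma> N"
    by (simp only: M ring_hom_mult[OF hom])
  then have "\<sigma> M = M"
    using \<open>\<sigma> N = N\<close> M pq(3) by simp
  moreover have "M \<in> R" "N \<in> R"
    unfolding M_def N_def using pq by (simp_all add: R)
  ultimately show ?thesis
    using F fixed_R \<open>\<sigma> N = N\<close> by metis
qed

section \<open>The cyclic automorphism\<close>

abbreviation eval6 :: "(complex \<Rightarrow> 'b::comm_ring_1) \<Rightarrow> 'b \<Rightarrow> 'b \<Rightarrow> 'b \<Rightarrow> 'b \<Rightarrow> 'b \<Rightarrow> 'b \<Rightarrow> P6 \<Rightarrow> 'b"
  where "eval6 k v1 v2 v3 v4 v5 v6 \<equiv> peval (peval (peval (peval (peval (peval k v1) v2) v3) v4) v5) v6"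

lemma ev6_eq_eval6: "ev6 v1 v2 v3 v4 v5 v6 = eval6 cst v1 v2 v3 v4 v5 v6"
  by (simp add: ev6_def[abs_def] ev5_def[abs_def] ev4_def[abs_def] ev3_def[abs_def]
      ev2_def[abs_def] ev1_def[abs_def] peval_def[abs_def])

definition const6 :: "complex \<Rightarrow> P6" where "const6 c = [:[:[:[:[:[:c:]:]:]:]:]:]"
definition pX1 :: P6 where "pX1 = [:[:[:[:[:[:0, 1:]:]:]:]:]:]"
definition pY1 :: P6 where "pY1 = [:[:[:[:[:0, 1:]:]:]:]:]"
definition pZ1 :: P6 where "pZ1 = [:[:[:[:0, 1:]:]:]:]"
definition pX2 :: P6 where "pX2 = [:[:[:0, 1:]:]:]"
definition pY2 :: P6 where "pY2 = [:[:0, 1:]:]"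
definition pZ2 :: P6 where "pZ2 = [:0, 1:]"

lemma is_ring_hom_const6 [simp]: "is_ring_hom const6"
  unfolding const6_def[abs_def] by (intro is_ring_hom_const_poly is_ring_hom_id)

lemma eval6_variables [simp]:
  assumes "is_ring_hom k"
  shows "eval6 k v1 v2 v3 v4 v5 v6 (const6 c) = k c"
    and "eval6 k v1 v2 v3 v4 v5 v6 pX1 = v1" "eval6 k v1 v2 v3 v4 v5 v6 pY1 = v2"
    and "eval6 k v1 v2 v3 v4 v5 v6 pZ1 = v3" "eval6 k v1 v2 v3 v4 v5 v6 pX2 = v4"
    and "eval6 k v1 v2 v3 v4 v5 v6 pY2 = v5" "eval6 k v1 v2 v3 v4 v5 v6 pZ2 = v6"
  by (simp_all add: assms const6_def pX1_def pY1_def pZ1_def pX2_def pY2_def pZ2_def)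

lemma eval6_at_variables: "eval6 const6 pX1 pY1 pZ1 pX2 pY2 pZ2 = (\<lambda>p. p)"
proof -
  have hom: "is_ring_hom (\<lambda>q. [:[:[:[:[:q:]:]:]:]:])" "is_ring_hom (\<lambda>q. [:[:[:[:q:]:]:]:])"
    "is_ring_hom (\<lambda>q. [:[:[:q:]:]:])" "is_ring_hom (\<lambda>q. [:[:q:]:])" "is_ring_hom (\<lambda>q. [:q:])"
    by (intro is_ring_hom_const_poly is_ring_hom_id)+
  have "peval const6 pX1 = (\<lambda>q. [:[:[:[:[:q:]:]:]:]:])"
    using peval_self[OF hom(1)] by (simp add: const6_def[abs_def] pX1_def)
  moreover have "peval (\<lambda>q. [:[:[:[:[:q:]:]:]:]:]) pY1 = (\<lambda>q. [:[:[:[:q:]:]:]:])"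
    using peval_self[OF hom(2)] by (simp add: pY1_def)
  moreover have "peval (\<lambda>q. [:[:[:[:q:]:]:]:]) pZ1 = (\<lambda>q. [:[:[:q:]:]:])"
    using peval_self[OF hom(3)] by (simp add: pZ1_def)
  moreover have "peval (\<lambda>q. [:[:[:q:]:]:]) pX2 = (\<lambda>q. [:[:q:]:])"
    using peval_self[OF hom(4)] by (simp add: pX2_def)
  moreover have "peval (\<lambda>q. [:[:q:]:]) pY2 = (\<lambda>q. [:q:])"
    using peval_self[OF hom(5)] by (simp add: pY2_def)
  moreover have "peval (\<lambda>q. [:q:]) pZ2 = (\<lambda>q. q)"
    using peval_self[OF is_ring_hom_id] by (simp add: pZ2_def)
  ultimately show ?thesis by simp
qed

definition cyc :: "P6 \<Rightarrow> P6" where "cyc = eval6 const6 pY1 pZ1 pX1 pY2 pZ2 pX2"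

lemma is_ring_hom_cyc [simp]: "is_ring_hom cyc"
  by (simp add: cyc_def)

lemma cyc_variables [simp]:
  "cyc (const6 c) = const6 c" "cyc \<circ> const6 = const6" "cyc pX1 = pY1" "cyc pY1 = pZ1"
  "cyc pZ1 = pX1" "cyc pX2 = pY2" "cyc pY2 = pZ2" "cyc pZ2 = pX2"
  by (simp_all add: cyc_def fun_eq_iff)

lemma cyc_cyc_cyc: "cyc (cyc (cyc p)) = p"
proof -
  have "cyc \<circ> cyc = eval6 const6 pZ1 pX1 pY1 pZ2 pX2 pY2"
    by (subst (2) cyc_def) (simp add: comp_peval o_assoc[symmetric])
  then have "cyc \<circ> (cyc \<circ> cyc) = eval6 const6 pX1 pY1 pZ1 pX2 pY2 pZ2"
    by (simp add: comp_peval o_assoc[symmetric])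
  then show ?thesis by (simp add: eval6_at_variables fun_eq_iff)
qed

lemma cyc_eq_0_iff: "cyc p = 0 \<longleftrightarrow> p = 0"
  by (metis cyc_cyc_cyc ring_hom_0[OF is_ring_hom_cyc])

definition to_L6 :: "P6 \<Rightarrow> L6" where "to_L6 p = Fract p 1"

lemma is_ring_hom_to_L6 [simp]: "is_ring_hom to_L6"
  by (simp add: is_ring_hom_def to_L6_def Zero_fract_def One_fract_def)

lemma to_L6_eq_0_iff: "to_L6 p = 0 \<longleftrightarrow> p = 0"
  by (simp add: to_L6_def Zero_fract_def eq_fract)

lemma to_L6_variables:
  "to_L6 (const6 c) = cst c" "to_L6 \<circ> const6 = cst" "to_L6 pX1 = X1" "to_L6 pY1 = Y1"
  "to_L6 pZ1 = Z1" "to_L6 pX2 = X2" "to_L6 pY2 = Y2" "to_L6 pZ2 = Z2"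
  by (simp_all add: fun_eq_iff to_L6_def const6_def cst_def pX1_def pY1_def pZ1_def pX2_def
      pY2_def pZ2_def X1_def Y1_def Z1_def X2_def Y2_def Z2_def)

lemma is_ring_hom_cst [simp]: "is_ring_hom cst"
  using is_ring_hom_comp[OF is_ring_hom_to_L6 is_ring_hom_const6] by (simp add: to_L6_variables)

lemma to_L6_in_subring:
  assumes "\<And>c. cst c \<in> R" "X1 \<in> R" "Y1 \<in> R" "Z1 \<in> R" "X2 \<in> R" "Y2 \<in> R" "Z2 \<in> R"
    and "\<And>x y. x \<in> R \<Longrightarrow> y \<in> R \<Longrightarrow> x + y \<in> R" "\<And>x y. x \<in> R \<Longrightarrow> y \<in> R \<Longrightarrow> x * y \<in> R"
  shows "to_L6 p \<in> R"
proof -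
  have "to_L6 \<circ> eval6 const6 pX1 pY1 pZ1 pX2 pY2 pZ2 = eval6 cst X1 Y1 Z1 X2 Y2 Z2"
    by (simp add: comp_peval o_assoc[symmetric] to_L6_variables)
  then have "to_L6 p = eval6 cst X1 Y1 Z1 X2 Y2 Z2 p"
    by (simp add: eval6_at_variables fun_eq_iff)
  also have "\<dots> \<in> R"
    using assms(1)[of 0] by (intro peval_closed) (simp_all add: assms ring_hom_0)
  finally show ?thesis .
qed

lemma ev6_cyclic: "ev6 Y1 Z1 X1 Y2 Z2 X2 p = to_L6 (cyc p)"
proof -
  have "to_L6 \<circ> cyc = ev6 Y1 Z1 X1 Y2 Z2 X2"
    by (simp add: cyc_def ev6_eq_eval6 comp_peval o_assoc[symmetric] to_L6_variables)
  then show ?thesis by (simp add: fun_eq_iff)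
qed

lemma sigma_Fract: assumes "q \<noteq> 0" shows "sigma (Fract p q) = Fract (cyc p) (cyc q)"
  unfolding sigma_def
proof (rule someI2)
  show "\<exists>p' q'. q' \<noteq> 0 \<and> Fract p q = Fract p' q' \<and>
      Fract (cyc p) (cyc q) = ev6 Y1 Z1 X1 Y2 Z2 X2 p' / ev6 Y1 Z1 X1 Y2 Z2 X2 q'"
    using assms by (intro exI[of _ p] exI[of _ q]) (simp add: ev6_cyclic to_L6_def cyc_eq_0_iff)
next
  fix r assume "\<exists>p' q'. q' \<noteq> 0 \<and> Fract p q = Fract p' q' \<and>
      r = ev6 Y1 Z1 X1 Y2 Z2 X2 p' / ev6 Y1 Z1 X1 Y2 Z2 X2 q'"
  then obtain p' q' where "q' \<noteq> 0" "Fract p q = Fract p' q'" "r = Fract (cyc p') (cyc q')"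
    by (auto simp: ev6_cyclic to_L6_def cyc_eq_0_iff)
  moreover from this have "cyc p * cyc q' = cyc p' * cyc q"
    using assms by (simp add: eq_fract flip: ring_hom_mult[OF is_ring_hom_cyc])
  ultimately show "r = Fract (cyc p) (cyc q)"
    using assms by (simp add: eq_fract cyc_eq_0_iff)
qed

lemma sigma_to_L6: "sigma (to_L6 p) = to_L6 (cyc p)"
  by (simp add: to_L6_def sigma_Fract ring_hom_1)

lemma is_ring_hom_sigma [simp]: "is_ring_hom sigma"
proof -
  have "sigma (x + y) = sigma x + sigma y \<and> sigma (x * y) = sigma x * sigma y" for x y
  proof (cases x; cases y)
    fix p q p' q' assume "x = Fract p q" "q \<noteq> 0" "y = Fract p' q'" "q' \<noteq> 0"
    then show ?thesis by (simp add: sigma_Fract ring_hom_simps cyc_eq_0_iff)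
  qed
  moreover have "sigma 0 = 0" "sigma 1 = 1"
    using sigma_to_L6[of 0] sigma_to_L6[of 1] by (simp_all add: ring_hom_simps)
  ultimately show ?thesis by (simp add: is_ring_hom_def)
qed

lemma sigma_sigma_sigma: "sigma (sigma (sigma x)) = x"
  by (cases x) (simp add: sigma_Fract cyc_eq_0_iff cyc_cyc_cyc)

lemma sigma_cst [simp]: "sigma (cst c) = cst c"
  by (simp flip: to_L6_variables(1) add: sigma_to_L6)

lemma sigma_variables [simp]:
  "sigma X1 = Y1" "sigma Y1 = Z1" "sigma Z1 = X1" "sigma X2 = Y2" "sigma Y2 = Z2" "sigma Z2 = X2"
  by (simp_all add: sigma_to_L6 flip: to_L6_variables)

section \<open>Generated subfields\<close>

lemma gen_zero: "0 \<in> gen_subfield S"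
  using gen_const[of 0 S] by (simp add: ring_hom_0)

lemma gen_one: "1 \<in> gen_subfield S"
  using gen_const[of 1 S] by (simp add: ring_hom_1)

lemma gen_numeral: "numeral n \<in> gen_subfield S"
  using gen_const[of "numeral n" S] by (simp add: ring_hom_numeral)

lemma gen_diff: "f \<in> gen_subfield S \<Longrightarrow> g \<in> gen_subfield S \<Longrightarrow> f - g \<in> gen_subfield S"
  using gen_add[of f S "- g"] gen_uminus[of g S] by simp

lemma gen_divide: "f \<in> gen_subfield S \<Longrightarrow> g \<in> gen_subfield S \<Longrightarrow> f / g \<in> gen_subfield S"
  using gen_mult[of f S "inverse g"] gen_inverse[of g S] by (simp add: divide_inverse)

lemma gen_power: "f \<in> gen_subfield S \<Longrightarrow> f ^ n \<in> gen_subfield S"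
  by (induction n) (simp_all add: gen_mult gen_one)

lemma gen_subfield_least:
  assumes "S \<subseteq> F" "\<And>c. cst c \<in> F"
    and "\<And>f g. f \<in> F \<Longrightarrow> g \<in> F \<Longrightarrow> f + g \<in> F" "\<And>f. f \<in> F \<Longrightarrow> - f \<in> F"
    and "\<And>f g. f \<in> F \<Longrightarrow> g \<in> F \<Longrightarrow> f * g \<in> F" "\<And>f. f \<in> F \<Longrightarrow> inverse f \<in> F"
  shows "gen_subfield S \<subseteq> F"
proof
  fix f assume "f \<in> gen_subfield S"
  then show "f \<in> F" by induction (use assms in auto)
qed

lemma gen_subfield_mono: "S \<subseteq> gen_subfield T \<Longrightarrow> gen_subfield S \<subseteq> gen_subfield T"
  by (rule gen_subfield_least) (auto intro: gen_subfield.intros)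

section \<open>The invariant field\<close>

lemma zeta_cube: "zeta ^ 3 = 1"
proof -
  have "zeta ^ 3 = cis (real 3 * (2 * pi / 3))" unfolding zeta_def by (rule DeMoivre)
  then show ?thesis by simp
qed

lemma zeta_sum: "1 + zeta + zeta ^ 2 = 0"
proof -
  have "sin (2 * pi / 3) > 0" by (rule sin_gt_zero) auto
  then have "zeta \<noteq> 1" by (auto simp: zeta_def complex_eq_iff)
  moreover have "(zeta - 1) * (1 + zeta + zeta ^ 2) = 0"
    using zeta_cube by (simp add: algebra_simps power2_eq_square power3_eq_cube)
  ultimately show ?thesis by simp
qed

abbreviation \<omega> :: L6 where "\<omega> \<equiv> cst zeta"
abbreviation \<iota> :: L6 where "\<iota> \<equiv> cst \<i>"

lemma omega_cube: "\<omega> ^ 3 = 1"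
  using arg_cong[of _ _ cst, OF zeta_cube] by (simp add: ring_hom_simps)

lemma omega_sum: "1 + \<omega> + \<omega> ^ 2 = 0"
  using arg_cong[of _ _ cst, OF zeta_sum] by (simp add: ring_hom_simps)

lemma iota_square: "\<iota> ^ 2 = -1"
  by (simp flip: ring_hom_power[OF is_ring_hom_cst] add: ring_hom_simps)

text \<open>L6 is not an instance of field_char_0, so this is not automatic.\<close>

lemma numeral_L6_nonzero: "(numeral n :: L6) \<noteq> 0"
  using ring_hom_eq_0_iff[OF is_ring_hom_cst, of "numeral n"] by (simp add: ring_hom_numeral)

abbreviation a1 :: L6 where "a1 \<equiv> aa X1 Y1 Z1"
abbreviation b1 :: L6 where "b1 \<equiv> bb X1 Y1 Z1"
abbreviation c1 :: L6 where "c1 \<equiv> cc X1 Y1 Z1"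
abbreviation a2 :: L6 where "a2 \<equiv> aa X2 Y2 Z2"
abbreviation b2 :: L6 where "b2 \<equiv> bb X2 Y2 Z2"
abbreviation c2 :: L6 where "c2 \<equiv> cc X2 Y2 Z2"

lemma bb_cc_omega: "bb x y z = x + \<omega> * y + \<omega>^2 * z" "cc x y z = x + \<omega>^2 * y + \<omega> * z"
  by (simp_all add: bb_def cc_def ring_hom_power)

lemma sigma_a1_a2: "sigma a1 = a1" "sigma a2 = a2"
  by (simp_all add: aa_def ring_hom_simps ac_simps)

lemma sigma_b1_c1_b2_c2:
  "sigma b1 = \<omega>^2 * b1" "sigma c1 = \<omega> * c1" "sigma b2 = \<omega>^2 * b2" "sigma c2 = \<omega> * c2"
  by (unfold bb_cc_omega ring_hom_simps[OF is_ring_hom_sigma] sigma_variables sigma_cst)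
    (use omega_cube in algebra)+

lemma b1_c1_nonzero: "b1 \<noteq> 0" "c1 \<noteq> 0"
proof -
  define E where "E = eval6 (\<lambda>x::complex. x) 1 0 0 0 0 0"
  have hom: "is_ring_hom E" by (simp add: E_def is_ring_hom_id)
  have "b1 = to_L6 (pX1 + const6 zeta * pY1 + const6 (zeta^2) * pZ1)"
    and "c1 = to_L6 (pX1 + const6 (zeta^2) * pY1 + const6 zeta * pZ1)"
    by (simp_all add: bb_def cc_def ring_hom_simps to_L6_variables)
  moreover have "E (pX1 + const6 zeta * pY1 + const6 (zeta^2) * pZ1) = 1"
    and "E (pX1 + const6 (zeta^2) * pY1 + const6 zeta * pZ1) = 1"
    by (simp_all add: E_def ring_hom_simps is_ring_hom_id)
  ultimately show "b1 \<noteq> 0" "c1 \<noteq> 0"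
    using ring_hom_0[OF hom] by (auto simp: to_L6_eq_0_iff)
qed

abbreviation K_field :: "L6 set" where
  "K_field \<equiv> gen_subfield {a1, a2, b1^3, b1 * c1, b1 * c2, c1 * b2}"

abbreviation FG_field :: "L6 set" where
  "FG_field \<equiv> gen_subfield {F1 X1 Y1 Z1, F2 X1 Y1 Z1, F3 X1 Y1 Z1, F1 X2 Y2 Z2,
     G1 X1 Y1 Z1 X2 Y2 Z2, G2 X1 Y1 Z1 X2 Y2 Z2}"

lemma K_field_generators:
  "a1 \<in> K_field" "a2 \<in> K_field" "b1^3 \<in> K_field" "b1 * c1 \<in> K_field" "b1 * c2 \<in> K_field"
  "c1 * b2 \<in> K_field"
  by (simp_all add: gen_base)

lemma FG_field_generators:
  "F1 X1 Y1 Z1 \<in> FG_field" "F2 X1 Y1 Z1 \<in> FG_field" "F3 X1 Y1 Z1 \<in> FG_field"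
  "F1 X2 Y2 Z2 \<in> FG_field" "G1 X1 Y1 Z1 X2 Y2 Z2 \<in> FG_field" "G2 X1 Y1 Z1 X2 Y2 Z2 \<in> FG_field"
  by (simp_all add: gen_base)

lemma F_G_in_terms_of_b_c:
  "F1 X1 Y1 Z1 = a1" "F1 X2 Y2 Z2 = a2"
  "F2 X1 Y1 Z1 = b1^2 / c1 + c1^2 / b1" "F3 X1 Y1 Z1 = - \<iota> * (b1^2 / c1 - c1^2 / b1)"
  "G1 X1 Y1 Z1 X2 Y2 Z2 = (b1 * c2 + c1 * b2) / 2"
  "G2 X1 Y1 Z1 X2 Y2 Z2 = - \<iota> * (b1 * c2 - c1 * b2) / 2"
  by (simp_all add: F1_def F2_def F3_def G1_def G2_def ring_hom_divide ring_hom_simps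
      ring_hom_numeral)

lemma FG_field_subset_K_field: "FG_field \<subseteq> K_field"
proof (rule gen_subfield_mono)
  have "b1^2 / c1 = b1^3 / (b1 * c1)" "c1^2 / b1 = (b1 * c1)^3 / (b1^3 * (b1 * c1))"
    using b1_c1_nonzero by (simp_all add: field_simps power2_eq_square power3_eq_cube)
  then have "b1^2 / c1 \<in> K_field" "c1^2 / b1 \<in> K_field"
    by (simp_all add: K_field_generators gen_divide gen_mult gen_power)
  then show "{F1 X1 Y1 Z1, F2 X1 Y1 Z1, F3 X1 Y1 Z1, F1 X2 Y2 Z2,
      G1 X1 Y1 Z1 X2 Y2 Z2, G2 X1 Y1 Z1 X2 Y2 Z2} \<subseteq> K_field"
    by (simp add: F_G_in_terms_of_b_c K_field_generators gen_add gen_diff gen_divide gen_mult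
        gen_uminus gen_numeral gen_const)
qed

lemma K_field_subset_FG_field: "K_field \<subseteq> FG_field"
proof (rule gen_subfield_mono)
  have "b1^2 / c1 = (F2 X1 Y1 Z1 + \<iota> * F3 X1 Y1 Z1) / 2"
    "c1^2 / b1 = (F2 X1 Y1 Z1 - \<iota> * F3 X1 Y1 Z1) / 2"
    "b1 * c2 = G1 X1 Y1 Z1 X2 Y2 Z2 + \<iota> * G2 X1 Y1 Z1 X2 Y2 Z2"
    "c1 * b2 = G1 X1 Y1 Z1 X2 Y2 Z2 - \<iota> * G2 X1 Y1 Z1 X2 Y2 Z2"
    by (simp_all add: F_G_in_terms_of_b_c field_simps numeral_L6_nonzero)
      (use iota_square in algebra)+
  then have P: "b1^2 / c1 \<in> FG_field" and Q: "c1^2 / b1 \<in> FG_field"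
    and "b1 * c2 \<in> FG_field" "c1 * b2 \<in> FG_field"
    by (simp_all only:)
      (simp_all add: FG_field_generators gen_add gen_diff gen_divide gen_mult gen_numeral gen_const)
  moreover have "b1 * c1 = (b1^2 / c1) * (c1^2 / b1)" "b1^3 = (b1^2 / c1) * (b1^2 / c1) * (c1^2 / b1)"
    using b1_c1_nonzero by (simp_all add: field_simps power2_eq_square power3_eq_cube)
  then have "b1 * c1 \<in> FG_field" "b1^3 \<in> FG_field"
    using gen_mult[OF P Q] gen_mult[OF gen_mult[OF P P] Q] by (simp_all only:)
  moreover have "a1 \<in> FG_field" "a2 \<in> FG_field"
    using FG_field_generators(1,4) by (simp_all only: F_G_in_terms_of_b_c(1,2))
  ultimately show "{a1, a2, b1^3, b1 * c1, b1 * c2, c1 * b2} \<subseteq> FG_field"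
    by simp
qed

lemma K_field_fixed: "f \<in> K_field \<Longrightarrow> sigma f = f"
proof -
  have "(\<omega>^2 * b1)^3 = b1^3" "\<omega>^2 * b1 * (\<omega> * c1) = b1 * c1" "\<omega>^2 * b1 * (\<omega> * c2) = b1 * c2"
    "\<omega> * c1 * (\<omega>^2 * b2) = c1 * b2"
    using omega_cube by algebra+
  then have "K_field \<subseteq> {f. sigma f = f}"
    by (intro gen_subfield_least)
      (simp_all add: ring_hom_simps ring_hom_inverse sigma_a1_a2 sigma_b1_c1_b2_c2)
  then show "f \<in> K_field \<Longrightarrow> sigma f = f" by blast
qed

definition K_b1_span :: "L6 set" where
  "K_b1_span = {u0 + u1 * b1 + u2 * b1^2 | u0 u1 u2. u0 \<in> K_field \<and> u1 \<in> K_field \<and> u2 \<in> K_field}"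

lemma K_b1_spanI:
  "u0 \<in> K_field \<Longrightarrow> u1 \<in> K_field \<Longrightarrow> u2 \<in> K_field \<Longrightarrow> u0 + u1 * b1 + u2 * b1^2 \<in> K_b1_span"
  unfolding K_b1_span_def by blast

lemma K_b1_spanE:
  assumes "x \<in> K_b1_span"
  obtains u0 u1 u2
  where "u0 \<in> K_field" "u1 \<in> K_field" "u2 \<in> K_field" "x = u0 + u1 * b1 + u2 * b1^2"
  using assms unfolding K_b1_span_def by blast

lemma K_subset_K_b1_span: "u \<in> K_field \<Longrightarrow> u \<in> K_b1_span"
  using K_b1_spanI[of u 0 0] by (simp add: gen_zero)

lemma K_b1_span_monomials:
  "u \<in> K_field \<Longrightarrow> u * b1 \<in> K_b1_span" "u \<in> K_field \<Longrightarrow> u * b1^2 \<in> K_b1_span"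
  using K_b1_spanI[of 0 u 0] K_b1_spanI[of 0 0 u] by (simp_all add: gen_zero)

lemma K_b1_span_add: "x \<in> K_b1_span \<Longrightarrow> y \<in> K_b1_span \<Longrightarrow> x + y \<in> K_b1_span"
proof (elim K_b1_spanE)
  fix u0 u1 u2 v0 v1 v2
  assume "u0 \<in> K_field" "u1 \<in> K_field" "u2 \<in> K_field" "v0 \<in> K_field" "v1 \<in> K_field" "v2 \<in> K_field"
  then have "(u0 + v0) + (u1 + v1) * b1 + (u2 + v2) * b1^2 \<in> K_b1_span"
    by (simp add: K_b1_spanI gen_add)
  moreover assume "x = u0 + u1 * b1 + u2 * b1^2" "y = v0 + v1 * b1 + v2 * b1^2"
  ultimately show "x + y \<in> K_b1_span"
    by (simp add: algebra_simps)
qed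

lemma K_b1_span_mult: "x \<in> K_b1_span \<Longrightarrow> y \<in> K_b1_span \<Longrightarrow> x * y \<in> K_b1_span"
proof (elim K_b1_spanE)
  fix u0 u1 u2 v0 v1 v2
  assume "u0 \<in> K_field" "u1 \<in> K_field" "u2 \<in> K_field" "v0 \<in> K_field" "v1 \<in> K_field" "v2 \<in> K_field"
  then have "(u0 * v0 + b1^3 * (u1 * v2 + u2 * v1)) + (u0 * v1 + u1 * v0 + b1^3 * (u2 * v2)) * b1
      + (u0 * v2 + u1 * v1 + u2 * v0) * b1^2 \<in> K_b1_span"
    by (simp add: K_b1_spanI gen_add gen_mult K_field_generators)
  moreover assume "x = u0 + u1 * b1 + u2 * b1^2" "y = v0 + v1 * b1 + v2 * b1^2"
  then have "x * y = (u0 * v0 + b1^3 * (u1 * v2 + u2 * v1)) + (u0 * v1 + u1 * v0 + b1^3 * (u2 * v2)) * b1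
      + (u0 * v2 + u1 * v1 + u2 * v0) * b1^2"
    by algebra
  ultimately show "x * y \<in> K_b1_span"
    by (simp only:)
qed

lemma b1_c1_b2_c2_in_K_b1_span: "b1 \<in> K_b1_span" "c1 \<in> K_b1_span" "b2 \<in> K_b1_span" "c2 \<in> K_b1_span"
proof -
  have "b1 = 1 * b1" "c1 = (b1 * c1 / b1^3) * b1^2"
    "b2 = (c1 * b2 / (b1 * c1)) * b1" "c2 = (b1 * c2 / b1^3) * b1^2"
    using b1_c1_nonzero by (simp_all add: field_simps power2_eq_square power3_eq_cube)
  moreover have "1 * b1 \<in> K_b1_span" "(b1 * c1 / b1^3) * b1^2 \<in> K_b1_span"
    "(c1 * b2 / (b1 * c1)) * b1 \<in> K_b1_span" "(b1 * c2 / b1^3) * b1^2 \<in> K_b1_span"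
    by (intro K_b1_span_monomials gen_one gen_divide K_field_generators)+
  ultimately show "b1 \<in> K_b1_span" "c1 \<in> K_b1_span" "b2 \<in> K_b1_span" "c2 \<in> K_b1_span"
    by metis+
qed

lemma to_L6_in_K_b1_span: "to_L6 p \<in> K_b1_span"
proof (rule to_L6_in_subring)
  have "inverse 3 \<in> K_field"
    by (rule gen_inverse[OF gen_numeral])
  then have third: "x / 3 \<in> K_b1_span" if "x \<in> K_b1_span" for x
    unfolding divide_inverse by (rule K_b1_span_mult[OF that K_subset_K_b1_span])
  have "\<omega> \<in> K_b1_span" "\<omega>^2 \<in> K_b1_span" "a1 \<in> K_b1_span" "a2 \<in> K_b1_span"
    by (simp_all add: K_subset_K_b1_span gen_const gen_power K_field_generators)
  then have "(a1 + b1 + c1) / 3 \<in> K_b1_span" "(a1 + \<omega>^2 * b1 + \<omega> * c1) / 3 \<in> K_b1_span"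
    "(a1 + \<omega> * b1 + \<omega>^2 * c1) / 3 \<in> K_b1_span" "(a2 + b2 + c2) / 3 \<in> K_b1_span"
    "(a2 + \<omega>^2 * b2 + \<omega> * c2) / 3 \<in> K_b1_span" "(a2 + \<omega> * b2 + \<omega>^2 * c2) / 3 \<in> K_b1_span"
    by (simp_all add: third K_b1_span_add K_b1_span_mult b1_c1_b2_c2_in_K_b1_span)
  moreover have "a1 + b1 + c1 = 3 * X1" "a1 + \<omega>^2 * b1 + \<omega> * c1 = 3 * Y1"
    "a1 + \<omega> * b1 + \<omega>^2 * c1 = 3 * Z1" "a2 + b2 + c2 = 3 * X2"
    "a2 + \<omega>^2 * b2 + \<omega> * c2 = 3 * Y2" "a2 + \<omega> * b2 + \<omega>^2 * c2 = 3 * Z2"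
    unfolding aa_def bb_cc_omega by (rule cube_root_inversion[OF omega_cube omega_sum])+
  ultimately have "3 * X1 / 3 \<in> K_b1_span" "3 * Y1 / 3 \<in> K_b1_span" "3 * Z1 / 3 \<in> K_b1_span"
    "3 * X2 / 3 \<in> K_b1_span" "3 * Y2 / 3 \<in> K_b1_span" "3 * Z2 / 3 \<in> K_b1_span"
    by (simp_all only:)
  then show "X1 \<in> K_b1_span" "Y1 \<in> K_b1_span" "Z1 \<in> K_b1_span"
    "X2 \<in> K_b1_span" "Y2 \<in> K_b1_span" "Z2 \<in> K_b1_span"
    by (simp_all add: numeral_L6_nonzero)
qed (simp_all add: K_subset_K_b1_span gen_const K_b1_span_add K_b1_span_mult)

lemma omega_mult_K_field: "u \<in> K_field \<Longrightarrow> \<omega> * u \<in> K_field" "u \<in> K_field \<Longrightarrow> \<omega>^2 * u \<in> K_field"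
  by (simp_all add: gen_mult gen_const gen_power)

lemma sigma_K_b1_span:
  assumes "u0 \<in> K_field" "u1 \<in> K_field" "u2 \<in> K_field"
  shows "sigma (u0 + u1 * b1 + u2 * b1^2) = u0 + (\<omega>^2 * u1) * b1 + (\<omega> * u2) * b1^2"
proof -
  have "sigma u0 = u0" "sigma u1 = u1" "sigma u2 = u2"
    using assms by (simp_all add: K_field_fixed)
  then have "sigma (u0 + u1 * b1 + u2 * b1^2) = u0 + u1 * (\<omega>^2 * b1) + u2 * (\<omega>^2 * b1)^2"
    by (simp add: ring_hom_simps sigma_b1_c1_b2_c2)
  also have "\<dots> = u0 + (\<omega>^2 * u1) * b1 + (\<omega> * u2) * b1^2"
    using omega_cube by algebra
  finally show ?thesis .
qed

lemma sigma_in_K_b1_span: "x \<in> K_b1_span \<Longrightarrow> sigma x \<in> K_b1_span"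
  by (elim K_b1_spanE) (simp add: sigma_K_b1_span K_b1_spanI omega_mult_K_field)

lemma fixed_K_b1_span_in_K_field:
  assumes "x \<in> K_b1_span" "sigma x = x"
  shows "x \<in> K_field"
proof -
  obtain u0 u1 u2 where u: "u0 \<in> K_field" "u1 \<in> K_field" "u2 \<in> K_field"
    and x: "x = u0 + u1 * b1 + u2 * b1^2"
    using assms(1) by (rule K_b1_spanE)
  have "3 * x = x + sigma x + sigma (sigma x)"
    using assms(2) by simp
  also have "\<dots> = (u0 + u1 * b1 + u2 * b1^2) + (u0 + (\<omega>^2 * u1) * b1 + (\<omega> * u2) * b1^2)
      + (u0 + (\<omega>^2 * (\<omega>^2 * u1)) * b1 + (\<omega> * (\<omega> * u2)) * b1^2)"
    by (simp only: x sigma_K_b1_span[OF u]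
        sigma_K_b1_span[OF u(1) omega_mult_K_field(2)[OF u(2)] omega_mult_K_field(1)[OF u(3)]])
  also have "\<dots> = 3 * u0"
    by (rule cube_root_average[OF omega_cube omega_sum])
  finally show ?thesis
    using u by (simp add: numeral_L6_nonzero)
qed

lemma fixed_in_K_field:
  assumes "sigma f = f"
  shows "f \<in> K_field"
proof (cases f)
  case (Fract p q)
  then have f: "f = to_L6 p / to_L6 q" by (simp add: to_L6_def)
  show ?thesis
    unfolding f
    by (rule fixed_quotient_mem[where \<sigma> = sigma and R = K_b1_span])
      (use assms[unfolded f] in \<open>simp_all add: sigma_sigma_sigma sigma_in_K_b1_span
        K_b1_span_mult fixed_K_b1_span_in_K_field gen_divide to_L6_in_K_b1_span\<close>)
qed

theorem mainTheorem7:
  shows "gen_subfield {F1 X1 Y1 Z1, F2 X1 Y1 Z1, F3 X1 Y1 Z1, F1 X2 Y2 Z2,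
                       G1 X1 Y1 Z1 X2 Y2 Z2, G2 X1 Y1 Z1 X2 Y2 Z2}
       = gen_subfield {aa X1 Y1 Z1, aa X2 Y2 Z2, (bb X1 Y1 Z1)^3,
                       bb X1 Y1 Z1 * cc X1 Y1 Z1, bb X1 Y1 Z1 * cc X2 Y2 Z2,
                       cc X1 Y1 Z1 * bb X2 Y2 Z2}
   \<and> gen_subfield {aa X1 Y1 Z1, aa X2 Y2 Z2, (bb X1 Y1 Z1)^3,
                       bb X1 Y1 Z1 * cc X1 Y1 Z1, bb X1 Y1 Z1 * cc X2 Y2 Z2,
                       cc X1 Y1 Z1 * bb X2 Y2 Z2}
       = {f. sigma f = f}"
proof
  show "FG_field = K_field"
    using FG_field_subset_K_field K_field_subset_FG_field by (rule equalityI)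
  show "K_field = {f. sigma f = f}"
    by (rule set_eqI) (use K_field_fixed fixed_in_K_field in blast)
qed

end
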